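(* Let $n\geq 3$ and $m\geq 1$. The matching $\mu$ on the face poset of $\Delta_m^{n,2}$ has no critical cells of dimension $2$.
   Context: $\Delta_m^{n,2}=\mathrm{VR}(\{0,\ldots,m\}^n;2)$, where $\{0,\ldots,m\}^n$ carries the Manhattan metric $d(x,y)=\sum_i|x_i-y_i|$ and $\mathrm{VR}(X;r)$ is the complex of finite subsets of diameter $\leq r$. Order the vertices as $v_1\prec\cdots\prec v_N$ ($N=(m+1)^n$) in the anti-lexicographic order ($x\prec y$ iff at the largest index $i$ with $x_i\neq y_i$, $x_i<y_i$). Let $T_0$ be the set of all simplices of $\Delta_m^{n,2}$, including the empty simplex. For $i=1,\ldots,N$ put $S_i=\{\sigma\in T_{i-1}: v_i\notin\sigma,\ \sigma\cup\{v_i\}\in T_{i-1}\}$, $\mu(\sigma)=\sigma\cup\{v_i\}$ for $\sigma\in S_i$, and $T_i=T_{i-1}\setminus(S_i\cup\{\sigma\cup\{v_i\}:\sigma\in S_i\})$. The critical cells of $\mu$ are the simplices in $T_N$; the dimension of a simplex is its cardinality minus one. *)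

theory Defs
  imports Main
begin

definition grid :: "nat \<Rightarrow> nat \<Rightarrow> nat list set" where
  "grid n m = {x. length x = n \<and> (\<forall>i<n. x ! i \<le> m)}"

definition manhattan :: "nat list \<Rightarrow> nat list \<Rightarrow> nat" where
  "manhattan x y = (\<Sum>i<length x. (x ! i - y ! i) + (y ! i - x ! i))"

text \<open>Vietoris--Rips complex VR(X; r): finite subsets of diameter at most r (empty set included).\<close>
definition VR :: "nat list set \<Rightarrow> nat \<Rightarrow> nat list set set" where
  "VR X r = {\<sigma>. \<sigma> \<subseteq> X \<and> finite \<sigma> \<and> (\<forall>x\<in>\<sigma>. \<forall>y\<in>\<sigma>. manhattan x y \<le> r)}"

definition Delta :: "nat \<Rightarrow> nat \<Rightarrow> nat list set set" where
  "Delta n m = VR (grid n m) 2"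

definition antilex_less :: "nat list \<Rightarrow> nat list \<Rightarrow> bool" where
  "antilex_less x y \<longleftrightarrow> (\<exists>i<length x. x ! i < y ! i \<and> (\<forall>j. i < j \<and> j < length x \<longrightarrow> x ! j = y ! j))"

definition vertex_list :: "nat \<Rightarrow> nat \<Rightarrow> nat list list" where
  "vertex_list n m = (THE vs. set vs = grid n m \<and> sorted_wrt antilex_less vs)"

definition match_set :: "nat list set set \<Rightarrow> nat list \<Rightarrow> nat list set set" where
  "match_set T v = {\<sigma>\<in>T. v \<notin> \<sigma> \<and> insert v \<sigma> \<in> T}"

definition match_step :: "nat list set set \<Rightarrow> nat list \<Rightarrow> nat list set set" where
  "match_step T v = T - (match_set T v \<union> (insert v) ` match_set T v)"

definition critical_cells :: "nat \<Rightarrow> nat \<Rightarrow> nat list set set" where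
  "critical_cells n m = foldl match_step (Delta n m) (vertex_list n m)"

end

theory Submission
  imports Defs "HOL-Library.List_Lexorder"
begin

(* Let \<sigma> be a 2-simplex and c the first vertex such that \<sigma> \<union> {c} is a simplex.  For no
   earlier vertex v is \<sigma> \<union> {v} a simplex, so \<sigma> survives until step c.  If c \<notin> \<sigma>, then \<sigma>
   is matched with \<sigma> \<union> {c} at step c.  If c \<in> \<sigma> = {a, b, c}, then c precedes a and b, and
   \<sigma> is matched with {a, b} at step c unless some earlier w with {w, a, b} a simplex has
   already matched {a, b}.  No such w exists: translate c to the origin and let k be the last
   coordinate where w - c is nonzero, so (w - c)_k < 0.  Then w itself or one of c - e_k and
   c - e_k \<plusminus> e_j (j < k) is a vertex preceding c within distance 2 of a, b and c,
   contradicting the choice of c. *)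

section \<open>The anti-lexicographic order\<close>

lemma antilex_less_iff_rev_less:
  assumes "length x = length y"
  shows "antilex_less x y \<longleftrightarrow> rev x < rev y"
proof -
  let ?n = "length x"
  have suffix: "take (?n - Suc i) (rev x) = take (?n - Suc i) (rev y) \<longleftrightarrow>
      (\<forall>j. i < j \<and> j < ?n \<longrightarrow> x ! j = y ! j)" if "i < ?n" for i
  proof -
    have "take (?n - Suc i) (rev x) = take (?n - Suc i) (rev y) \<longleftrightarrow> drop (Suc i) x = drop (Suc i) y"
      using assms that by (simp add: take_rev)
    also have "\<dots> \<longleftrightarrow> (\<forall>k. Suc i + k < ?n \<longrightarrow> x ! (Suc i + k) = y ! (Suc i + k))"
      using assms by (auto simp: list_eq_iff_nth_eq)
    also have "\<dots> \<longleftrightarrow> (\<forall>j. i < j \<and> j < ?n \<longrightarrow> x ! j = y ! j)"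
    proof (intro iffI allI impI)
      fix j assume "\<forall>k. Suc i + k < ?n \<longrightarrow> x ! (Suc i + k) = y ! (Suc i + k)" "i < j \<and> j < ?n"
      then show "x ! j = y ! j" by (auto dest: spec[of _ "j - Suc i"])
    qed auto
    finally show ?thesis .
  qed
  have "rev x < rev y \<longleftrightarrow> (\<exists>i<?n. take i (rev x) = take i (rev y) \<and> rev x ! i < rev y ! i)"
    using assms by (simp add: list_less_def lexord_take_index_conv)
  also have "\<dots> \<longleftrightarrow>
      (\<exists>i<?n. take (?n - Suc i) (rev x) = take (?n - Suc i) (rev y) \<and> x ! i < y ! i)"
  proof
    assume "\<exists>i<?n. take i (rev x) = take i (rev y) \<and> rev x ! i < rev y ! i"
    then obtain i where "i < ?n" "take i (rev x) = take i (rev y)" "rev x ! i < rev y ! i"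
      by blast
    then show "\<exists>i<?n. take (?n - Suc i) (rev x) = take (?n - Suc i) (rev y) \<and> x ! i < y ! i"
      using assms by (intro exI[of _ "?n - Suc i"]) (simp add: rev_nth)
  next
    assume "\<exists>i<?n. take (?n - Suc i) (rev x) = take (?n - Suc i) (rev y) \<and> x ! i < y ! i"
    then obtain i where "i < ?n" "take (?n - Suc i) (rev x) = take (?n - Suc i) (rev y)" "x ! i < y ! i"
      by blast
    then show "\<exists>i<?n. take i (rev x) = take i (rev y) \<and> rev x ! i < rev y ! i"
      using assms by (intro exI[of _ "?n - Suc i"]) (simp add: rev_nth Suc_diff_Suc)
  qed
  also have "\<dots> \<longleftrightarrow> antilex_less x y"
    unfolding antilex_less_def using suffix by auto
  finally show ?thesis by simp
qed

lemma finite_grid: "finite (grid n m)"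
proof (rule finite_subset)
  show "grid n m \<subseteq> {xs. set xs \<subseteq> {0..m} \<and> length xs = n}"
    by (auto simp: grid_def in_set_conv_nth)
  show "finite {xs. set xs \<subseteq> {0..m} \<and> length xs = n}"
    by (rule finite_lists_length_eq) simp
qed

lemma grid_length: "x \<in> grid n m \<Longrightarrow> length x = n"
  by (simp add: grid_def)

lemma sorted_antilex_iff_sorted_rev:
  assumes "set vs \<subseteq> grid n m"
  shows "sorted_wrt antilex_less vs \<longleftrightarrow> sorted_wrt (<) (map rev vs)"
proof -
  have same: "antilex_less x y \<longleftrightarrow> rev x < rev y" if "x \<in> set vs" "y \<in> set vs" for x y
    using that assms by (intro antilex_less_iff_rev_less) (metis grid_length subsetD)
  show ?thesis
    unfolding sorted_wrt_map
    by (rule iffI; erule sorted_wrt_mono_rel[rotated]) (simp_all add: same)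
qed

lemma vertex_list: "set (vertex_list n m) = grid n m" "sorted_wrt antilex_less (vertex_list n m)"
proof -
  let ?P = "\<lambda>vs. set vs = grid n m \<and> sorted_wrt antilex_less vs"
  have set_iff: "set (map rev vs) = rev ` grid n m \<longleftrightarrow> set vs = grid n m" for vs
    by (simp add: inj_image_eq_iff inj_def)
  have P_iff: "?P vs \<longleftrightarrow> sorted_wrt (<) (map rev vs) \<and> set (map rev vs) = rev ` grid n m" for vs
    unfolding set_iff using sorted_antilex_iff_sorted_rev[of vs n m] by auto
  obtain ys where ys: "sorted_wrt (<) ys \<and> set ys = rev ` grid n m"
    and ys_unique: "\<forall>zs. sorted_wrt (<) zs \<and> set zs = rev ` grid n m \<longrightarrow> zs = ys"
    using ex1_sorted_list_for_set_if_finite[OF finite_imageI[OF finite_grid, of rev n m]]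
    by (rule ex1E)
  have "\<exists>!vs. ?P vs"
  proof (rule ex1I)
    have rev_rev: "map rev (map rev xs) = xs" for xs :: "nat list list"
      by (simp add: map_idI)
    show "?P (map rev ys)"
      using ys by (intro P_iff[THEN iffD2]) (simp add: rev_rev)
    show "vs = map rev ys" if "?P vs" for vs
      using ys_unique[rule_format, OF P_iff[THEN iffD1, OF that]] rev_rev[of vs] by simp
  qed
  then have "?P (vertex_list n m)"
    unfolding vertex_list_def by (rule theI')
  then show "set (vertex_list n m) = grid n m" "sorted_wrt antilex_less (vertex_list n m)"
    by blast+
qed

lemma antilex_less_asym:
  assumes "length x = length y" "antilex_less x y"
  shows "\<not> antilex_less y x"
  using assms by (simp add: antilex_less_iff_rev_less)

section \<open>The matching\<close>

lemma match_step_subset: "match_step T v \<subseteq> T"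
  unfolding match_step_def by auto

lemma foldl_match_step_subset: "foldl match_step T vs \<subseteq> T"
  by (induction vs arbitrary: T) (auto dest: subsetD[OF match_step_subset])

lemma in_foldl_match_step:
  assumes "T \<subseteq> D" "\<rho> \<in> T" "\<forall>v\<in>set vs. insert v \<rho> \<notin> D"
  shows "\<rho> \<in> foldl match_step T vs"
  using assms
proof (induction vs arbitrary: T)
  case (Cons v vs)
  have "v \<notin> \<rho>"
    using Cons.prems by (auto simp: insert_absorb)
  with Cons.prems have "\<rho> \<in> match_step T v"
    unfolding match_step_def match_set_def by auto
  with Cons.prems match_step_subset[of T v] show ?case
    by (auto intro: Cons.IH)
qed simp

lemma match_step_removes:
  assumes "\<rho> \<in> T" "insert v \<rho> \<in> T" "v \<notin> \<rho>"
  shows "\<rho> \<notin> match_step T v" "insert v \<rho> \<notin> match_step T v"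
  using assms unfolding match_step_def match_set_def by auto

lemma not_in_foldl_match_step:
  assumes closed: "\<And>\<tau> \<rho>. \<tau> \<in> D \<Longrightarrow> \<rho> \<subseteq> \<tau> \<Longrightarrow> \<rho> \<in> D"
    and "\<sigma> \<in> D" "insert c \<sigma> \<in> D" "\<forall>u\<in>set us. insert u \<sigma> \<notin> D"
    and face: "c \<in> \<sigma> \<Longrightarrow> \<forall>u\<in>set us. insert u (\<sigma> - {c}) \<notin> D"
  shows "\<sigma> \<notin> foldl match_step D (us @ c # ws)"
proof -
  let ?T = "foldl match_step D us"
  have \<sigma>: "\<sigma> \<in> ?T"
    using in_foldl_match_step[OF order_refl assms(2,4)] .
  have "\<sigma> \<notin> match_step ?T c"
  proof (cases "c \<in> \<sigma>")
    case True
    have "\<sigma> - {c} \<in> ?T"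
      using in_foldl_match_step[OF order_refl closed[OF assms(2)] face[OF True]] by blast
    then show ?thesis
      using match_step_removes(2)[of "\<sigma> - {c}" ?T c] \<sigma> True by (simp add: insert_absorb)
  next
    case False
    have "\<forall>u\<in>set us. insert u (insert c \<sigma>) \<notin> D"
      using assms(4) closed by blast
    then have "insert c \<sigma> \<in> ?T"
      by (rule in_foldl_match_step[OF order_refl assms(3)])
    then show ?thesis
      using match_step_removes(1) \<sigma> False by blast
  qed
  then show ?thesis
    using foldl_match_step_subset[of "match_step ?T c" ws] by auto
qed

section \<open>Integer vectors close to the origin\<close>

type_synonym int_vec = "nat \<Rightarrow> int"

definition l1_norm :: "nat \<Rightarrow> int_vec \<Rightarrow> int" where
  "l1_norm n f = (\<Sum>i<n. \<bar>f i\<bar>)"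

definition antilex_pos :: "nat \<Rightarrow> int_vec \<Rightarrow> bool" where
  "antilex_pos n f \<longleftrightarrow> (\<exists>i<n. 0 < f i \<and> (\<forall>j. i < j \<and> j < n \<longrightarrow> f j = 0))"

definition antilex_neg :: "nat \<Rightarrow> int_vec \<Rightarrow> bool" where
  "antilex_neg n f \<longleftrightarrow> (\<exists>i<n. f i < 0 \<and> (\<forall>j. i < j \<and> j < n \<longrightarrow> f j = 0))"

definition in_box :: "nat \<Rightarrow> int_vec \<Rightarrow> int_vec \<Rightarrow> int_vec \<Rightarrow> bool" where
  "in_box n lo hi f \<longleftrightarrow> (\<forall>i<n. lo i \<le> f i \<and> f i \<le> hi i)"

(* Coordinates relative to a vertex c, in which the grid becomes the box lo..hi: V is a vertex
   preceding c at distance at most 2 from c, from c + A and from c + B. *)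
definition common_nbr_below ::
    "nat \<Rightarrow> int_vec \<Rightarrow> int_vec \<Rightarrow> int_vec \<Rightarrow> int_vec \<Rightarrow> int_vec \<Rightarrow> bool" where
  "common_nbr_below n lo hi A B V \<longleftrightarrow> antilex_neg n V \<and> in_box n lo hi V \<and>
     l1_norm n V \<le> 2 \<and> l1_norm n (\<lambda>i. V i - A i) \<le> 2 \<and> l1_norm n (\<lambda>i. V i - B i) \<le> 2"

lemma common_nbr_below_commute:
  "common_nbr_below n lo hi A B V \<longleftrightarrow> common_nbr_below n lo hi B A V"
  unfolding common_nbr_below_def by blast

lemma l1_norm_nonneg: "0 \<le> l1_norm n f"
  by (simp add: l1_norm_def sum_nonneg)

lemma l1_norm_diff_commute: "l1_norm n (\<lambda>i. f i - g i) = l1_norm n (\<lambda>i. g i - f i)"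
  by (simp add: l1_norm_def abs_minus_commute)

lemma l1_norm_update: "k < n \<Longrightarrow> l1_norm n (f(k := v)) = l1_norm n f - \<bar>f k\<bar> + \<bar>v\<bar>"
  unfolding l1_norm_def by (simp add: sum.remove[of "{..<n}" k])

lemma l1_norm_diff_ge:
  assumes "\<And>i. i < n \<Longrightarrow> \<bar>f i\<bar> - \<bar>g i\<bar> + h i \<le> \<bar>f i - g i\<bar>"
  shows "l1_norm n f - l1_norm n g + sum h {..<n} \<le> l1_norm n (\<lambda>i. f i - g i)"
proof -
  have "(\<Sum>i<n. \<bar>f i\<bar> - \<bar>g i\<bar> + h i) \<le> (\<Sum>i<n. \<bar>f i - g i\<bar>)"
    using assms by (intro sum_mono) auto
  then show ?thesis
    by (simp add: l1_norm_def sum.distrib sum_subtractf)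
qed

lemma l1_norm_triangle: "l1_norm n f \<le> l1_norm n g + l1_norm n (\<lambda>i. f i - g i)"
  using l1_norm_diff_ge[of n f g "\<lambda>_. 0"] by (simp add: abs_triangle_ineq2)

lemma l1_norm_ne_0_imp_nonzero: "l1_norm n f \<noteq> 0 \<Longrightarrow> \<exists>j<n. f j \<noteq> 0"
  by (rule ccontr) (simp add: l1_norm_def)

lemma l1_norm_unit_diff:
  assumes "k < n"
  shows "l1_norm n (\<lambda>i. ((\<lambda>_. 0)(k := -1)) i - X i) = l1_norm n X - \<bar>X k\<bar> + \<bar>X k + 1\<bar>"
proof -
  have "(\<lambda>i. ((\<lambda>_. 0)(k := -1)) i - X i) = (\<lambda>i. - X i)(k := - 1 - X k)"
    by auto
  then show ?thesis
    using l1_norm_update[OF assms, of "\<lambda>i. - X i"] by (simp add: l1_norm_def abs_minus_commute)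
qed

lemma l1_norm_two_units_diff:
  assumes "j < n" "k < n" "j \<noteq> k"
  shows "l1_norm n (\<lambda>i. ((\<lambda>_. 0)(k := -1, j := s)) i - X i) =
    l1_norm n X - \<bar>X k\<bar> + \<bar>X k + 1\<bar> - \<bar>X j\<bar> + \<bar>X j - s\<bar>"
proof -
  have "(\<lambda>i. ((\<lambda>_. 0)(k := -1, j := s)) i - X i) = ((\<lambda>i. ((\<lambda>_. 0)(k := -1)) i - X i))(j := s - X j)"
    using assms by auto
  then show ?thesis
    using assms l1_norm_update[of j n "\<lambda>i. ((\<lambda>_. 0)(k := -1)) i - X i"] l1_norm_unit_diff[of k n X]
    by (simp add: abs_minus_commute)
qed

lemma abs_minus_sgn: "(x::int) \<noteq> 0 \<Longrightarrow> \<bar>x - sgn x\<bar> = \<bar>x\<bar> - 1"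
  by (simp add: sgn_if)

lemma in_box_sgn:
  assumes "in_box n lo hi (\<lambda>_. 0)" "in_box n lo hi X" "j < n"
  shows "lo j \<le> sgn (X j) \<and> sgn (X j) \<le> hi j"
  using assms unfolding in_box_def by (auto simp: sgn_if)

lemma common_nbr_below_unit:
  assumes "k < n" "in_box n lo hi (\<lambda>_. 0)" "lo k \<le> -1"
    and "l1_norm n A - \<bar>A k\<bar> + \<bar>A k + 1\<bar> \<le> 2" "l1_norm n B - \<bar>B k\<bar> + \<bar>B k + 1\<bar> \<le> 2"
  shows "common_nbr_below n lo hi A B ((\<lambda>_. 0)(k := -1))"
proof -
  have "l1_norm n ((\<lambda>_. 0)(k := -1)) = 1"
    using l1_norm_unit_diff[OF assms(1), of "\<lambda>_. 0"] by (simp add: l1_norm_def)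
  moreover have "antilex_neg n ((\<lambda>_. 0)(k := -1))"
    unfolding antilex_neg_def using assms(1) by (intro exI[of _ k]) auto
  moreover have "in_box n lo hi ((\<lambda>_. 0)(k := -1))"
    using assms(2,3) by (auto simp: in_box_def)
  ultimately show ?thesis
    using assms l1_norm_unit_diff[OF assms(1)] unfolding common_nbr_below_def by simp
qed

lemma common_nbr_below_two_units:
  assumes "j < k" "k < n" "\<bar>s\<bar> = 1" "in_box n lo hi (\<lambda>_. 0)" "lo k \<le> -1" "lo j \<le> s" "s \<le> hi j"
    and "l1_norm n A - \<bar>A k\<bar> + \<bar>A k + 1\<bar> - \<bar>A j\<bar> + \<bar>A j - s\<bar> \<le> 2"
    and "l1_norm n B - \<bar>B k\<bar> + \<bar>B k + 1\<bar> - \<bar>B j\<bar> + \<bar>B j - s\<bar> \<le> 2"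
  shows "common_nbr_below n lo hi A B ((\<lambda>_. 0)(k := -1, j := s))"
proof -
  have jk: "j < n" "j \<noteq> k" using assms(1,2) by auto
  have "l1_norm n ((\<lambda>_. 0)(k := -1, j := s)) = 2"
    using l1_norm_two_units_diff[OF jk(1) assms(2) jk(2), of s "\<lambda>_. 0"] assms(3) by (simp add: l1_norm_def)
  moreover have "antilex_neg n ((\<lambda>_. 0)(k := -1, j := s))"
    unfolding antilex_neg_def using assms(1,2) by (intro exI[of _ k]) auto
  moreover have "in_box n lo hi ((\<lambda>_. 0)(k := -1, j := s))"
    using assms(4-7) by (auto simp: in_box_def)
  ultimately show ?thesis
    using assms l1_norm_two_units_diff[OF jk(1) assms(2) jk(2)] unfolding common_nbr_below_def by simp
qed

lemma vanishes_from_top: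
  assumes "k < n" "W k < 0" "\<forall>i. k < i \<and> i < n \<longrightarrow> W i = 0" "3 \<le> l1_norm n W"
    and "0 \<le> X k" "l1_norm n X \<le> 2" "l1_norm n (\<lambda>i. W i - X i) \<le> 2"
  shows "\<forall>i. k \<le> i \<and> i < n \<longrightarrow> X i = 0"
proof (intro allI impI)
  fix i assume i: "k \<le> i \<and> i < n"
  let ?h = "\<lambda>i. if k \<le> i then 2 * \<bar>X i\<bar> else 0"
  have "l1_norm n W - l1_norm n X + sum ?h {..<n} \<le> l1_norm n (\<lambda>i. W i - X i)"
    by (rule l1_norm_diff_ge) (use assms in \<open>auto simp: le_less\<close>)
  moreover have "?h i \<le> sum ?h {..<n}"
    by (rule member_le_sum) (use i in auto)
  ultimately show "X i = 0"
    using assms i by auto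
qed

lemma exists_coord_same_sign:
  assumes "l1_norm n A = 2" "l1_norm n B = 2" "l1_norm n (\<lambda>i. A i - B i) \<le> 2"
  shows "\<exists>j<n. A j \<noteq> 0 \<and> sgn (B j) = sgn (A j)"
proof (rule ccontr)
  assume opposite: "\<not> ?thesis"
  have "l1_norm n A - l1_norm n B + sum (\<lambda>i. 2 * \<bar>B i\<bar>) {..<n} \<le> l1_norm n (\<lambda>i. A i - B i)"
  proof (rule l1_norm_diff_ge)
    fix i assume "i < n"
    with opposite have "A i = 0 \<or> sgn (B i) \<noteq> sgn (A i)" by auto
    then show "\<bar>A i\<bar> - \<bar>B i\<bar> + 2 * \<bar>B i\<bar> \<le> \<bar>A i - B i\<bar>"
      by (auto simp: sgn_if split: if_splits)
  qed
  moreover have "sum (\<lambda>i. 2 * \<bar>B i\<bar>) {..<n} = 2 * l1_norm n B"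
    by (simp add: l1_norm_def sum_distrib_left)
  ultimately show False
    using assms by simp
qed

lemma common_nbr_below_far_neg:
  assumes "k < n" "in_box n lo hi (\<lambda>_. 0)" "lo k \<le> -1" "in_box n lo hi X"
    and "\<forall>i. k \<le> i \<and> i < n \<longrightarrow> X i = 0" "l1_norm n X = 2"
    and "Y k \<le> -1" "l1_norm n Y \<le> 2"
  shows "\<exists>V. common_nbr_below n lo hi X Y V"
proof -
  obtain j where j: "j < n" "X j \<noteq> 0"
    using l1_norm_ne_0_imp_nonzero[of n X] assms(6) by auto
  have "j < k"
    using assms(5) j by (meson not_le)
  then have "common_nbr_below n lo hi X Y ((\<lambda>_. 0)(k := -1, j := sgn (X j)))"
    using assms j in_box_sgn[OF assms(2,4) j(1)] abs_minus_sgn[OF j(2)]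
      abs_triangle_ineq4[of "Y j" "sgn (X j)"]
    by (intro common_nbr_below_two_units) (auto simp: abs_sgn_eq)
  then show ?thesis by blast
qed

lemma common_nbr_below_far_small:
  assumes top: "k < n" "W k < 0" "\<forall>i. k < i \<and> i < n \<longrightarrow> W i = 0" "3 \<le> l1_norm n W"
    and box: "in_box n lo hi (\<lambda>_. 0)" "lo k \<le> -1" "in_box n lo hi X"
    and X: "\<forall>i. k \<le> i \<and> i < n \<longrightarrow> X i = 0" "l1_norm n X = 2" "l1_norm n (\<lambda>i. W i - X i) \<le> 2"
    and Y: "antilex_pos n Y" "0 \<le> Y k" "l1_norm n Y \<le> 1" "l1_norm n (\<lambda>i. W i - Y i) \<le> 2"
  shows "\<exists>V. common_nbr_below n lo hi X Y V"
proof -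
  obtain l where l: "l < n" "0 < Y l"
    using Y(1) unfolding antilex_pos_def by blast
  have Wl: "1 \<le> W l"
  proof (rule ccontr)
    assume "\<not> 1 \<le> W l"
    then have "l1_norm n W - l1_norm n Y + sum (\<lambda>i. if i = l then 2 * \<bar>Y i\<bar> else 0) {..<n}
        \<le> l1_norm n (\<lambda>i. W i - Y i)"
      by (intro l1_norm_diff_ge) (use l in auto)
    then show False
      using top(4) Y(3,4) l by simp
  qed
  have NW: "l1_norm n W \<le> 3"
    using l1_norm_triangle[of n W Y] Y(3,4) by simp
  have lk: "l < k"
    using top Wl l by (metis leI less_le not_one_le_zero order.strict_trans1)
  have Xk: "X k = 0"
    using X(1) top(1) by simp
  have Xl: "1 \<le> X l"
  proof (rule ccontr)
    assume "\<not> 1 \<le> X l"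
    let ?h = "\<lambda>i. (if i = k then 2 * \<bar>W i\<bar> else 0) + (if i = l then 2 * \<bar>W i\<bar> else 0)"
    have "l1_norm n X - l1_norm n W + sum ?h {..<n} \<le> l1_norm n (\<lambda>i. X i - W i)"
      by (rule l1_norm_diff_ge) (use \<open>\<not> 1 \<le> X l\<close> Wl Xk lk in auto)
    moreover have "sum ?h {..<n} = 2 * \<bar>W k\<bar> + 2 * \<bar>W l\<bar>"
      using top(1) l(1) by (simp add: sum.distrib)
    ultimately show False
      using X(2,3) NW top(2) Wl l1_norm_diff_commute[of n X W] by simp
  qed
  have "common_nbr_below n lo hi X Y ((\<lambda>_. 0)(k := -1, l := 1))"
    using lk top(1) box in_box_sgn[OF box(1,3) l(1)] Xk Xl X(2) Y(2,3) l(2)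
    by (intro common_nbr_below_two_units) auto
  then show ?thesis by blast
qed

lemma common_nbr_below_both_far:
  assumes "k < n" "in_box n lo hi (\<lambda>_. 0)" "lo k \<le> -1" "in_box n lo hi A"
    and "\<forall>i. k \<le> i \<and> i < n \<longrightarrow> A i = 0" "l1_norm n A = 2"
    and "\<forall>i. k \<le> i \<and> i < n \<longrightarrow> B i = 0" "l1_norm n B = 2"
    and "l1_norm n (\<lambda>i. A i - B i) \<le> 2"
  shows "\<exists>V. common_nbr_below n lo hi A B V"
proof -
  obtain j where j: "j < n" "A j \<noteq> 0" "sgn (B j) = sgn (A j)"
    using exists_coord_same_sign[OF assms(6,8,9)] by blast
  have "j < k"
    using assms(5) j by (meson not_le)
  moreover have "B j \<noteq> 0"
    using j by (auto simp: sgn_0_0)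
  ultimately have "common_nbr_below n lo hi A B ((\<lambda>_. 0)(k := -1, j := sgn (A j)))"
    using assms j in_box_sgn[OF assms(2,4) j(1)] abs_minus_sgn[OF j(2)] abs_minus_sgn[of "B j"]
    by (intro common_nbr_below_two_units) (auto simp: abs_sgn_eq)
  then show ?thesis by blast
qed

lemma common_nbr_below_near_far:
  assumes top: "k < n" "W k < 0" "\<forall>i. k < i \<and> i < n \<longrightarrow> W i = 0" "3 \<le> l1_norm n W"
    and box: "in_box n lo hi (\<lambda>_. 0)" "lo k \<le> -1" "in_box n lo hi X"
    and X: "0 \<le> X k" "l1_norm n X = 2" "l1_norm n (\<lambda>i. W i - X i) \<le> 2"
    and Y: "Y k \<le> -1 \<or> l1_norm n Y \<le> 1" "antilex_pos n Y" "l1_norm n Y \<le> 2"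
      "l1_norm n (\<lambda>i. W i - Y i) \<le> 2"
  shows "\<exists>V. common_nbr_below n lo hi X Y V"
proof -
  have X_vanishes: "\<forall>i. k \<le> i \<and> i < n \<longrightarrow> X i = 0"
    using vanishes_from_top[where X = X, OF top X(1)] X(2,3) by simp
  show ?thesis
  proof (cases "Y k \<le> -1")
    case True
    then show ?thesis
      using common_nbr_below_far_neg[OF top(1) box X_vanishes X(2) _ Y(3)] by blast
  next
    case False
    with Y(1) have "0 \<le> Y k" "l1_norm n Y \<le> 1" by auto
    then show ?thesis
      using common_nbr_below_far_small[OF top box X_vanishes X(2,3) Y(2) _ _ Y(4)] by blast
  qed
qed

lemma exists_common_nbr_below:
  assumes "antilex_pos n A" "antilex_pos n B" "antilex_neg n W"
    and box: "in_box n lo hi (\<lambda>_. 0)" "in_box n lo hi A" "in_box n lo hi B" "in_box n lo hi W"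
    and "l1_norm n A \<le> 2" "l1_norm n B \<le> 2" "l1_norm n (\<lambda>i. A i - B i) \<le> 2"
    and "l1_norm n (\<lambda>i. W i - A i) \<le> 2" "l1_norm n (\<lambda>i. W i - B i) \<le> 2"
  shows "\<exists>V. common_nbr_below n lo hi A B V"
proof (cases "l1_norm n W \<le> 2")
  case True
  with assms show ?thesis
    unfolding common_nbr_below_def by blast
next
  case False
  then have NW: "3 \<le> l1_norm n W" by simp
  obtain k where top: "k < n" "W k < 0" "\<forall>i. k < i \<and> i < n \<longrightarrow> W i = 0"
    using assms(3) unfolding antilex_neg_def by blast
  have lo_k: "lo k \<le> -1"
    using box(4) top unfolding in_box_def by force
  \<comment> \<open>A k \<le> -1 \<or> l1_norm n A \<le> 1 says that -e_k is within distance 2 of A\<close>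
  show ?thesis
  proof (cases "A k \<le> -1 \<or> l1_norm n A \<le> 1"; cases "B k \<le> -1 \<or> l1_norm n B \<le> 1")
    assume "A k \<le> -1 \<or> l1_norm n A \<le> 1" "B k \<le> -1 \<or> l1_norm n B \<le> 1"
    with assms(8,9) l1_norm_nonneg[of n A] l1_norm_nonneg[of n B]
    have "common_nbr_below n lo hi A B ((\<lambda>_. 0)(k := -1))"
      by (intro common_nbr_below_unit[OF top(1) box(1) lo_k]) auto
    then show ?thesis by blast
  next
    assume "A k \<le> -1 \<or> l1_norm n A \<le> 1" "\<not> (B k \<le> -1 \<or> l1_norm n B \<le> 1)"
    with assms(9) have "0 \<le> B k" "l1_norm n B = 2" by auto
    then obtain V where "common_nbr_below n lo hi B A V"
      using common_nbr_below_near_far[OF top NW box(1) lo_k box(3) _ _ assms(12)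
          \<open>A k \<le> -1 \<or> l1_norm n A \<le> 1\<close> assms(1,8,11)] by blast
    then show ?thesis
      using common_nbr_below_commute by blast
  next
    assume "\<not> (A k \<le> -1 \<or> l1_norm n A \<le> 1)" "B k \<le> -1 \<or> l1_norm n B \<le> 1"
    with assms(8) have "0 \<le> A k" "l1_norm n A = 2" by auto
    then show ?thesis
      using common_nbr_below_near_far[OF top NW box(1) lo_k box(2) _ _ assms(11)
          \<open>B k \<le> -1 \<or> l1_norm n B \<le> 1\<close> assms(2,9,12)] by blast
  next
    assume "\<not> (A k \<le> -1 \<or> l1_norm n A \<le> 1)" "\<not> (B k \<le> -1 \<or> l1_norm n B \<le> 1)"
    with assms(8,9) have A: "0 \<le> A k" "l1_norm n A = 2" and B: "0 \<le> B k" "l1_norm n B = 2"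
      by auto
    then show ?thesis
      using common_nbr_below_both_far[OF top(1) box(1) lo_k box(2)
          vanishes_from_top[where X = A, OF top NW A(1)] A(2) vanishes_from_top[where X = B, OF top NW B(1)] B(2) assms(10)]
        assms(8,9,11,12) by simp
  qed
qed

section \<open>Grid points as integer vectors\<close>

lemma antilex_less_imp_pos:
  assumes "antilex_less x y" "length y = length x"
  shows "antilex_pos (length x) (\<lambda>i. int (y ! i) - int (x ! i))"
  using assms unfolding antilex_less_def antilex_pos_def by force

lemma antilex_neg_imp_less:
  assumes "antilex_neg n (\<lambda>i. int (x ! i) - int (y ! i))" "length x = n" "length y = n"
  shows "antilex_less x y"
  using assms unfolding antilex_less_def antilex_neg_def by force

lemma manhattan_self: "manhattan x x = 0"
  by (simp add: manhattan_def)

lemma manhattan_commute: "length x = length y \<Longrightarrow> manhattan x y = manhattan y x"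
  unfolding manhattan_def by (intro sum.cong) auto

lemma manhattan_eq_l1_norm:
  assumes "length x = n"
  shows "int (manhattan x y) = l1_norm n (\<lambda>i. int (x ! i) - int (y ! i))"
proof -
  have "int (p - q) + int (q - p) = \<bar>int p - int q\<bar>" for p q :: nat
    by (cases "p \<le> q") auto
  then show ?thesis
    unfolding manhattan_def l1_norm_def using assms by simp
qed

lemma Delta_iff:
  "\<sigma> \<in> Delta n m \<longleftrightarrow> \<sigma> \<subseteq> grid n m \<and> finite \<sigma> \<and> (\<forall>x\<in>\<sigma>. \<forall>y\<in>\<sigma>. manhattan x y \<le> 2)"
  unfolding Delta_def VR_def by simp

lemma Delta_subset_closed: "\<tau> \<in> Delta n m \<Longrightarrow> \<rho> \<subseteq> \<tau> \<Longrightarrow> \<rho> \<in> Delta n m"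
  unfolding Delta_iff by (auto intro: finite_subset)

lemma insert_in_Delta:
  assumes "\<sigma> \<in> Delta n m" "w \<in> grid n m" "\<forall>x\<in>\<sigma>. manhattan w x \<le> 2"
  shows "insert w \<sigma> \<in> Delta n m"
proof -
  have "manhattan x w \<le> 2" if "x \<in> \<sigma>" for x
    using that assms manhattan_commute[of x w] by (auto simp: Delta_iff grid_length subset_iff)
  then show ?thesis
    using assms manhattan_self[of w] by (auto simp: Delta_iff)
qed

lemma grid_point_of_common_nbr_below:
  assumes c: "c \<in> grid n m" and "length a = n" "length b = n"
    and V: "common_nbr_below n (\<lambda>i. - int (c ! i)) (\<lambda>i. int m - int (c ! i))
      (\<lambda>i. int (a ! i) - int (c ! i)) (\<lambda>i. int (b ! i) - int (c ! i)) V"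
  shows "\<exists>w'. w' \<in> grid n m \<and> antilex_less w' c \<and> (\<forall>x\<in>{a, b, c}. manhattan w' x \<le> 2)"
proof -
  have box: "\<forall>i<n. - int (c ! i) \<le> V i \<and> V i \<le> int m - int (c ! i)"
    using V unfolding common_nbr_below_def in_box_def by blast
  obtain w' where w': "w' \<in> grid n m" "\<And>i. i < n \<Longrightarrow> int (w' ! i) = int (c ! i) + V i"
  proof
    let ?w = "map (\<lambda>i. nat (int (c ! i) + V i)) [0..<n]"
    show "int (?w ! i) = int (c ! i) + V i" if "i < n" for i
      using box that by force
    then show "?w \<in> grid n m"
      using box unfolding grid_def by (auto simp flip: of_nat_le_iff)
  qed
  have "int (manhattan w' x) = l1_norm n (\<lambda>i. V i - (int (x ! i) - int (c ! i)))" for x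
    using manhattan_eq_l1_norm[OF grid_length[OF w'(1)], of x] w'(2)
    unfolding l1_norm_def by (simp add: algebra_simps)
  then have "int (manhattan w' a) \<le> 2" "int (manhattan w' b) \<le> 2" "int (manhattan w' c) \<le> 2"
    using V unfolding common_nbr_below_def by simp_all
  then have "\<forall>x\<in>{a, b, c}. manhattan w' x \<le> 2"
    by auto
  moreover have "antilex_less w' c"
  proof (rule antilex_neg_imp_less)
    obtain i where "i < n" "V i < 0" "\<forall>j. i < j \<and> j < n \<longrightarrow> V j = 0"
      using V unfolding common_nbr_below_def antilex_neg_def by blast
    then show "antilex_neg n (\<lambda>i. int (w' ! i) - int (c ! i))"
      unfolding antilex_neg_def using w'(2) by (intro exI[of _ i]) simp
  qed (use c w'(1) in \<open>simp_all add: grid_length\<close>)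
  ultimately show ?thesis
    using w'(1) by blast
qed

lemma Delta_coface_below:
  assumes abc: "{a, b, c} \<in> Delta n m" and wab: "insert w {a, b} \<in> Delta n m"
    and "antilex_less w c" "antilex_less c a" "antilex_less c b"
  shows "\<exists>w'. antilex_less w' c \<and> insert w' {a, b, c} \<in> Delta n m"
proof -
  have grid: "a \<in> grid n m" "b \<in> grid n m" "c \<in> grid n m" "w \<in> grid n m"
    using abc wab by (auto simp: Delta_iff)
  then have len: "length a = n" "length b = n" "length c = n" "length w = n"
    by (auto simp: grid_length)
  have d: "manhattan c a \<le> 2" "manhattan c b \<le> 2" "manhattan a b \<le> 2"
    "manhattan w a \<le> 2" "manhattan w b \<le> 2"
    using abc wab unfolding Delta_iff by auto
  define shift where "shift x = (\<lambda>i. int (x ! i) - int (c ! i))" for x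
  define lo where "lo = (\<lambda>i. - int (c ! i))"
  define hi where "hi = (\<lambda>i. int m - int (c ! i))"
  have dist: "l1_norm n (\<lambda>i. shift x i - shift y i) = int (manhattan x y)" if "length x = n" for x y
    using manhattan_eq_l1_norm[OF that, of y] by (simp add: shift_def)
  have norm: "l1_norm n (shift x) = int (manhattan c x)" for x
    using manhattan_eq_l1_norm[OF len(3), of x] l1_norm_diff_commute[of n "\<lambda>i. int (x ! i)"]
    by (simp add: shift_def)
  have box: "in_box n lo hi (shift x)" if "x \<in> grid n m" for x
    using that unfolding in_box_def grid_def shift_def lo_def hi_def by auto
  have box0: "in_box n lo hi (\<lambda>_. 0)"
    using box[OF grid(3)] by (simp add: shift_def)
  have "antilex_pos n (shift a)" "antilex_pos n (shift b)"
    using antilex_less_imp_pos[of c a] antilex_less_imp_pos[of c b] assms(4,5) len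
    by (simp_all add: shift_def)
  moreover have "antilex_neg n (shift w)"
    using assms(3) len unfolding antilex_less_def antilex_neg_def shift_def by force
  moreover have "l1_norm n (shift a) \<le> 2" "l1_norm n (shift b) \<le> 2"
    "l1_norm n (\<lambda>i. shift a i - shift b i) \<le> 2"
    "l1_norm n (\<lambda>i. shift w i - shift a i) \<le> 2" "l1_norm n (\<lambda>i. shift w i - shift b i) \<le> 2"
    using d norm dist[OF len(1)] dist[OF len(4)] by simp_all
  ultimately obtain V where "common_nbr_below n lo hi (shift a) (shift b) V"
    using exists_common_nbr_below box0 box[OF grid(1)] box[OF grid(2)] box[OF grid(4)] by blast
  then obtain w' where "w' \<in> grid n m" "antilex_less w' c" "\<forall>x\<in>{a, b, c}. manhattan w' x \<le> 2"
    using grid_point_of_common_nbr_below[OF grid(3) len(1,2)] unfolding shift_def lo_def hi_def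
    by blast
  then show ?thesis
    using insert_in_Delta[OF abc] by blast
qed

section \<open>No critical 2-simplices\<close>

lemma first_coface_vertex:
  assumes \<sigma>: "\<sigma> \<in> Delta n m" "\<sigma> \<noteq> {}"
  obtains us c ws where "vertex_list n m = us @ c # ws" "insert c \<sigma> \<in> Delta n m"
    and "\<forall>u\<in>set us. insert u \<sigma> \<notin> Delta n m \<and> antilex_less u c"
    and "\<And>w. w \<in> grid n m \<Longrightarrow> antilex_less w c \<Longrightarrow> insert w \<sigma> \<notin> Delta n m"
    and "\<And>x. x \<in> \<sigma> \<Longrightarrow> x \<noteq> c \<Longrightarrow> antilex_less c x"
proof -
  let ?D = "Delta n m"
  have \<sigma>_grid: "\<sigma> \<subseteq> grid n m"
    using \<sigma>(1) by (simp add: Delta_iff)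
  have "\<exists>x\<in>set (vertex_list n m). insert x \<sigma> \<in> ?D"
  proof -
    obtain x where "x \<in> \<sigma>"
      using \<sigma>(2) by blast
    then have "x \<in> set (vertex_list n m)" "insert x \<sigma> \<in> ?D"
      using \<sigma>(1) \<sigma>_grid vertex_list(1) by (auto simp: insert_absorb)
    then show ?thesis by blast
  qed
  then obtain us c ws where split: "vertex_list n m = us @ c # ws"
    and c: "insert c \<sigma> \<in> ?D" and us: "\<forall>u\<in>set us. insert u \<sigma> \<notin> ?D"
    by (rule split_list_first_propE)
  have before: "\<forall>u\<in>set us. antilex_less u c" and after: "\<forall>w\<in>set ws. antilex_less c w"
    using vertex_list(2)[of n m] unfolding split by (simp_all add: sorted_wrt_append)
  have c_grid: "c \<in> grid n m"
    using vertex_list(1)[of n m] unfolding split by auto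
  have in_vs: "x \<in> set us \<or> x = c \<or> x \<in> set ws" if "x \<in> grid n m" for x
    using that vertex_list(1)[of n m] unfolding split by auto
  show thesis
  proof
    show "\<forall>u\<in>set us. insert u \<sigma> \<notin> ?D \<and> antilex_less u c"
      using us before by blast
    show "insert w \<sigma> \<notin> ?D" if "w \<in> grid n m" "antilex_less w c" for w
    proof -
      have "w \<noteq> c"
        using that(2) by (auto simp: antilex_less_def)
      moreover have "w \<notin> set ws"
        using after that c_grid antilex_less_asym[of w c] by (auto simp: grid_length)
      ultimately show ?thesis
        using in_vs[OF that(1)] us by blast
    qed
    show "antilex_less c x" if "x \<in> \<sigma>" "x \<noteq> c" for x
    proof -
      have "insert x \<sigma> \<in> ?D"
        using that(1) \<sigma>(1) by (simp add: insert_absorb)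
      then have "x \<in> set ws"
        using in_vs[of x] that \<sigma>_grid us by blast
      then show ?thesis
        using after by blast
    qed
  qed (use split c in auto)
qed

lemma triangle_not_critical:
  assumes \<sigma>: "\<sigma> \<in> Delta n m" "card \<sigma> = 3"
  shows "\<sigma> \<notin> critical_cells n m"
proof -
  let ?D = "Delta n m"
  obtain us c ws where split: "vertex_list n m = us @ c # ws" and c: "insert c \<sigma> \<in> ?D"
    and us: "\<forall>u\<in>set us. insert u \<sigma> \<notin> ?D \<and> antilex_less u c"
    and first: "\<And>w. w \<in> grid n m \<Longrightarrow> antilex_less w c \<Longrightarrow> insert w \<sigma> \<notin> ?D"
    and after: "\<And>x. x \<in> \<sigma> \<Longrightarrow> x \<noteq> c \<Longrightarrow> antilex_less c x"
    using first_coface_vertex[OF \<sigma>(1)] \<sigma>(2) by (metis card.empty zero_neq_numeral)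
  have "\<forall>u\<in>set us. insert u (\<sigma> - {c}) \<notin> ?D" if c_in: "c \<in> \<sigma>"
  proof
    fix u assume u: "u \<in> set us"
    obtain a b where ab: "\<sigma> - {c} = {a, b}"
      using \<sigma>(2) c_in card_2_iff[of "\<sigma> - {c}"] by (auto simp: card_Diff_singleton)
    then have "a \<in> \<sigma> - {c}" "b \<in> \<sigma> - {c}"
      by auto
    then have ca: "antilex_less c a" and cb: "antilex_less c b"
      using after by auto
    have \<sigma>_eq: "\<sigma> = {a, b, c}"
      using ab c_in by blast
    have abc: "{a, b, c} \<in> ?D"
      using \<sigma>(1) \<sigma>_eq by simp
    show "insert u (\<sigma> - {c}) \<notin> ?D"
    proof
      assume "insert u (\<sigma> - {c}) \<in> ?D"
      then have "insert u {a, b} \<in> ?D"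
        by (simp only: ab)
      then obtain w' where w': "antilex_less w' c" "insert w' {a, b, c} \<in> ?D"
        using Delta_coface_below[OF abc _ _ ca cb] us u by blast
      moreover have "w' \<in> grid n m"
        using w'(2) by (simp add: Delta_iff)
      ultimately show False
        using first[of w'] \<sigma>_eq by simp
    qed
  qed
  then show ?thesis
    unfolding critical_cells_def split
    using us by (intro not_in_foldl_match_step[OF _ \<sigma>(1) c]) (auto intro: Delta_subset_closed)
qed

theorem lemma4p9:
  fixes n m :: nat
  assumes "n \<ge> 3" and "m \<ge> 1"
  shows "\<forall>\<sigma>\<in>critical_cells n m. card \<sigma> - 1 \<noteq> 2"
proof
  fix \<sigma> assume "\<sigma> \<in> critical_cells n m"
  moreover have "critical_cells n m \<subseteq> Delta n m"
    unfolding critical_cells_def by (rule foldl_match_step_subset)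
  ultimately show "card \<sigma> - 1 \<noteq> 2"
    using triangle_not_critical[of \<sigma> n m] by force
qed

end
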